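(* Let $k\geq 1$ be an odd integer and let $G$ be a finite simple graph that has an almost perfect integer $k$-matching. Then for every $S\subseteq V(G)$, $$\mathrm{odd}(G-S)+k\cdot i(G-S)\leq k|S|+1 .$$
   Context: All graphs are finite, simple and undirected. For $v\in V(G)$, $\Gamma(v)$ denotes the set of edges incident with $v$. For a positive integer $k$, an integer $k$-matching of $G$ is a function $h:E(G)\to\{0,1,\dots,k\}$ such that $\sum_{e\in\Gamma(v)}h(e)\leq k$ for every $v\in V(G)$. It is almost perfect if there is exactly one vertex $v'$ with $\sum_{e\in\Gamma(v')}h(e)=k-1$ and $\sum_{e\in\Gamma(v)}h(e)=k$ for every other vertex $v$. For a graph $H$, $i(H)$ is the number of isolated vertices (vertices of degree $0$) of $H$, and $\mathrm{odd}(H)$ is the number of connected components of $H$ that have an odd number of vertices and at least three vertices. *)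

theory Defs
  imports Main
begin

definition simple_graph :: "'a set \<Rightarrow> 'a set set \<Rightarrow> bool" where
  "simple_graph V E \<longleftrightarrow> finite V \<and> (\<forall>e\<in>E. e \<subseteq> V \<and> card e = 2)"

definition inc_edges :: "'a set set \<Rightarrow> 'a \<Rightarrow> 'a set set" where
  "inc_edges E v = {e \<in> E. v \<in> e}"

definition int_k_matching :: "'a set \<Rightarrow> 'a set set \<Rightarrow> nat \<Rightarrow> ('a set \<Rightarrow> nat) \<Rightarrow> bool" where
  "int_k_matching V E k h \<longleftrightarrow>
     (\<forall>e\<in>E. h e \<le> k) \<and> (\<forall>v\<in>V. (\<Sum>e\<in>inc_edges E v. h e) \<le> k)"

definition almost_perfect_int_k_matching ::
  "'a set \<Rightarrow> 'a set set \<Rightarrow> nat \<Rightarrow> ('a set \<Rightarrow> nat) \<Rightarrow> bool" where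
  "almost_perfect_int_k_matching V E k h \<longleftrightarrow>
     int_k_matching V E k h \<and>
     (\<exists>!v'. v' \<in> V \<and> (\<Sum>e\<in>inc_edges E v'. h e) = k - 1) \<and>
     (\<exists>v'\<in>V. (\<Sum>e\<in>inc_edges E v'. h e) = k - 1 \<and>
        (\<forall>v\<in>V - {v'}. (\<Sum>e\<in>inc_edges E v. h e) = k))"

text \<open>The graph G - S: vertex set V - S, edges of E avoiding S.\<close>
definition del_edges :: "'a set set \<Rightarrow> 'a set \<Rightarrow> 'a set set" where
  "del_edges E S = {e \<in> E. e \<inter> S = {}}"

inductive reach :: "'a set \<Rightarrow> 'a set set \<Rightarrow> 'a \<Rightarrow> 'a \<Rightarrow> bool" for V E where
  refl: "v \<in> V \<Longrightarrow> reach V E v v"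
| step: "reach V E u v \<Longrightarrow> {v, w} \<in> E \<Longrightarrow> w \<in> V \<Longrightarrow> reach V E u w"

definition components :: "'a set \<Rightarrow> 'a set set \<Rightarrow> 'a set set" where
  "components V E = (\<lambda>v. {w. reach V E v w}) ` V"

definition iso_count :: "'a set \<Rightarrow> 'a set set \<Rightarrow> nat" where
  "iso_count V E = card {v \<in> V. inc_edges E v = {}}"

definition odd_count :: "'a set \<Rightarrow> 'a set set \<Rightarrow> nat" where
  "odd_count V E = card {C \<in> components V E. odd (card C) \<and> card C \<ge> 3}"

end

theory Submission
  imports Defs
begin

text \<open>Let \<open>F\<close> consist of the odd components (of size at least three) of \<open>G - S\<close> and the
singletons of its isolated vertices; these are disjoint subsets of \<open>V - S\<close>. Charge each member
\<open>X\<close> of \<open>F\<close> with the weight \<open>h\<close> carries on the edges between \<open>X\<close> and \<open>S\<close>. Since an edge meets at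
most one member of \<open>F\<close>, the total charge is at most the weighted degree sum over \<open>S\<close>, i.e. at
most \<open>k |S|\<close>. On the other hand, an isolated vertex \<open>v \<noteq> v'\<close> is charged its full degree \<open>k\<close>, and
an odd component avoiding \<open>v'\<close> is charged an odd amount, since its degree sum \<open>k |X|\<close> is odd
while edges inside \<open>X\<close> contribute evenly. Only the member containing \<open>v'\<close> can fall short, by
one.\<close>

definition wdeg :: "'a set set \<Rightarrow> ('a set \<Rightarrow> nat) \<Rightarrow> 'a \<Rightarrow> nat" where
  "wdeg E h v = (\<Sum>e\<in>inc_edges E v. h e)"

definition cut_weight :: "'a set set \<Rightarrow> ('a set \<Rightarrow> nat) \<Rightarrow> 'a set \<Rightarrow> 'a set \<Rightarrow> nat" where
  "cut_weight E h S X = (\<Sum>e\<in>{e\<in>E. e \<inter> X \<noteq> {} \<and> e \<inter> S \<noteq> {}}. h e)"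

lemma reach_imp_mem: "reach V E u v \<Longrightarrow> u \<in> V \<and> v \<in> V"
  by (induction rule: reach.induct) auto

lemma reach_prepend: "reach V E a b \<Longrightarrow> {c, a} \<in> E \<Longrightarrow> c \<in> V \<Longrightarrow> reach V E c b"
  by (induction rule: reach.induct) (meson reach.refl reach.step)+

lemma reach_sym: "reach V E u v \<Longrightarrow> reach V E v u"
  by (induction rule: reach.induct) (auto intro: reach.refl reach_prepend simp: insert_commute)

lemma reach_trans: "reach V E b c \<Longrightarrow> reach V E a b \<Longrightarrow> reach V E a c"
  by (induction rule: reach.induct) (auto intro: reach.step)

lemma reach_from_isolated: "reach V E v w \<Longrightarrow> inc_edges E v = {} \<Longrightarrow> w = v"
  by (induction rule: reach.induct) (auto simp: inc_edges_def)

lemma components_subset: "C \<in> components V E \<Longrightarrow> C \<subseteq> V"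
  by (auto simp: components_def dest: reach_imp_mem)

lemma components_eq_if_common:
  assumes "X \<in> components V E" "Y \<in> components V E" "x \<in> X" "x \<in> Y"
  shows "X = Y"
proof -
  obtain u1 u2 where u: "X = {w. reach V E u1 w}" "Y = {w. reach V E u2 w}"
    using assms(1,2) by (auto simp: components_def)
  then have "reach V E u1 u2" "reach V E u2 u1"
    using assms(3,4) by (meson mem_Collect_eq reach_sym reach_trans)+
  then show ?thesis unfolding u by (auto intro: reach_trans)
qed

lemma components_closed:
  "C \<in> components V E \<Longrightarrow> x \<in> C \<Longrightarrow> w \<in> V \<Longrightarrow> {x, w} \<in> E \<Longrightarrow> w \<in> C"
  by (auto simp: components_def intro: reach.step)

lemma component_of_isolated:
  assumes "C \<in> components V E" "v \<in> C" "inc_edges E v = {}"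
  shows "C = {v}"
proof -
  obtain u where u: "C = {w. reach V E u w}"
    using assms(1) by (auto simp: components_def)
  then have "reach V E v u" using assms(2) by (auto intro: reach_sym)
  then show ?thesis
    using u assms(2,3) by (auto dest: reach_from_isolated reach_trans)
qed

lemma simple_graph_finite_edges: "simple_graph V E \<Longrightarrow> finite E"
  unfolding simple_graph_def by (meson Pow_iff finite_Pow_iff finite_subset subsetI)

lemma sum_wdeg_eq_sum_edges:
  assumes "finite E" "finite C"
  shows "(\<Sum>v\<in>C. wdeg E h v) = (\<Sum>e\<in>E. card (C \<inter> e) * h e)"
proof -
  have "(\<Sum>v\<in>C. wdeg E h v) = (\<Sum>e\<in>E. \<Sum>v\<in>C. if v \<in> e then h e else 0)"
    unfolding wdeg_def inc_edges_def
    by (simp add: sum.inter_filter[OF assms(1)] sum.swap[of _ C])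
  also have "\<dots> = (\<Sum>e\<in>E. card (C \<inter> e) * h e)"
    by (simp add: sum.If_cases[OF assms(2)] Int_def)
  finally show ?thesis .
qed

lemma card_inter_edge_of_closed_set:
  assumes "simple_graph V E" "e \<in> E" "C \<subseteq> V - S"
    and closed: "\<And>x w. x \<in> C \<Longrightarrow> w \<in> V - S \<Longrightarrow> {x, w} \<in> del_edges E S \<Longrightarrow> w \<in> C"
  shows "card (C \<inter> e) = 2 * of_bool (e \<subseteq> C) + of_bool (e \<inter> C \<noteq> {} \<and> e \<inter> S \<noteq> {})"
proof -
  obtain a b where ab: "e = {a, b}" "a \<noteq> b" "a \<in> V" "b \<in> V"
    using assms(1,2) unfolding simple_graph_def by (metis card_2_iff insert_subset)
  have leaves_to_S: "y \<in> S" if "x \<in> C" "y \<notin> C" "{x, y} = e" "y \<in> V" for x y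
    using closed[of x y] that assms(2,3) by (auto simp: del_edges_def)
  show ?thesis
  proof (cases "a \<in> C"; cases "b \<in> C")
    assume "a \<in> C" "b \<in> C"
    then show ?thesis using ab assms(3) by auto
  next
    assume "a \<in> C" "b \<notin> C"
    then have "C \<inter> e = {a}" "b \<in> S" using ab leaves_to_S[of a b] by auto
    then show ?thesis using ab \<open>b \<notin> C\<close> by auto
  next
    assume "a \<notin> C" "b \<in> C"
    then have "C \<inter> e = {b}" "a \<in> S" using ab leaves_to_S[of b a] by (auto simp: insert_commute)
    then show ?thesis using ab \<open>a \<notin> C\<close> by auto
  next
    assume "a \<notin> C" "b \<notin> C"
    then show ?thesis using ab by auto
  qed
qed

lemma sum_wdeg_closed_set:
  assumes "simple_graph V E" "C \<subseteq> V - S"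
    and closed: "\<And>x w. x \<in> C \<Longrightarrow> w \<in> V - S \<Longrightarrow> {x, w} \<in> del_edges E S \<Longrightarrow> w \<in> C"
  shows "(\<Sum>v\<in>C. wdeg E h v) = 2 * (\<Sum>e\<in>{e\<in>E. e \<subseteq> C}. h e) + cut_weight E h S C"
proof -
  have fin: "finite E" "finite C"
    using assms(1,2) simple_graph_finite_edges finite_subset[of C V]
    by (auto simp: simple_graph_def)
  have "(\<Sum>v\<in>C. wdeg E h v) = (\<Sum>e\<in>E. card (C \<inter> e) * h e)"
    using sum_wdeg_eq_sum_edges[OF fin] .
  also have "\<dots> = (\<Sum>e\<in>E. 2 * (if e \<subseteq> C then h e else 0)
                        + (if e \<inter> C \<noteq> {} \<and> e \<inter> S \<noteq> {} then h e else 0))"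
    using card_inter_edge_of_closed_set[OF assms(1) _ assms(2) closed] by (intro sum.cong) auto
  also have "\<dots> = 2 * (\<Sum>e\<in>{e\<in>E. e \<subseteq> C}. h e) + cut_weight E h S C"
    by (simp add: cut_weight_def sum.distrib sum_distrib_left sum.inter_filter[OF fin(1)])
  finally show ?thesis .
qed

lemma sum_cut_weight_le:
  assumes "simple_graph V E" "S \<subseteq> V" "finite F" "pairwise disjnt F"
    and sub: "\<And>X. X \<in> F \<Longrightarrow> X \<subseteq> V - S"
  shows "(\<Sum>X\<in>F. cut_weight E h S X) \<le> (\<Sum>s\<in>S. wdeg E h s)"
proof -
  define cut where "cut X = {e\<in>E. e \<inter> X \<noteq> {} \<and> e \<inter> S \<noteq> {}}" for X
  have fin: "finite E" "finite S"
    using assms(1,2) simple_graph_finite_edges finite_subset by (auto simp: simple_graph_def)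
  have edge: "finite e" "card e = 2" if "e \<in> E" for e
    using assms(1) that by (auto simp: simple_graph_def card_ge_0_finite)
  have cuts_disjoint: "cut X \<inter> cut Y = {}" if "X \<in> F" "Y \<in> F" "X \<noteq> Y" for X Y
  proof (rule ccontr)
    assume "cut X \<inter> cut Y \<noteq> {}"
    then obtain e x y s where "e \<in> E" "x \<in> e \<inter> X" "y \<in> e \<inter> Y" "s \<in> e \<inter> S"
      by (auto simp: cut_def)
    moreover have "disjnt X Y" "X \<inter> S = {}" "Y \<inter> S = {}"
      using assms(4) sub that by (auto simp: pairwise_def)
    ultimately have "{x, y, s} \<subseteq> e" "x \<noteq> y" "x \<noteq> s" "y \<noteq> s"
      by (auto simp: disjnt_def)
    then show False using edge[OF \<open>e \<in> E\<close>] card_mono[of e "{x, y, s}"] by auto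
  qed
  have "(\<Sum>X\<in>F. cut_weight E h S X) = (\<Sum>e\<in>(\<Union>X\<in>F. cut X). h e)"
    unfolding cut_weight_def cut_def[symmetric]
    by (rule sum.UNION_disjoint[symmetric]) (use assms(3) fin cuts_disjoint in \<open>auto simp: cut_def\<close>)
  also have "\<dots> \<le> (\<Sum>e\<in>{e\<in>E. e \<inter> S \<noteq> {}}. h e)"
    by (rule sum_mono2) (use fin in \<open>auto simp: cut_def\<close>)
  also have "\<dots> \<le> (\<Sum>e\<in>{e\<in>E. e \<inter> S \<noteq> {}}. card (S \<inter> e) * h e)"
    using edge by (intro sum_mono) (auto simp: Suc_le_eq card_gt_0_iff Int_commute)
  also have "\<dots> \<le> (\<Sum>e\<in>E. card (S \<inter> e) * h e)"
    by (rule sum_mono2) (use fin in auto)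
  also have "\<dots> = (\<Sum>s\<in>S. wdeg E h s)"
    using sum_wdeg_eq_sum_edges[OF fin] by simp
  finally show ?thesis .
qed

lemma odd_cut_weight_if_odd_component:
  assumes "simple_graph V E" "X \<in> components (V - S) (del_edges E S)"
    and "odd (card X)" "odd k" "\<And>v. v \<in> X \<Longrightarrow> wdeg E h v = k"
  shows "odd (cut_weight E h S X)"
proof -
  have "(\<Sum>v\<in>X. wdeg E h v) = 2 * (\<Sum>e\<in>{e\<in>E. e \<subseteq> X}. h e) + cut_weight E h S X"
    by (rule sum_wdeg_closed_set[OF assms(1) components_subset[OF assms(2)]])
       (rule components_closed[OF assms(2)])
  moreover have "(\<Sum>v\<in>X. wdeg E h v) = card X * k"
    using assms(5) by simp
  moreover have "odd (card X * k)"
    using assms(3,4) by simp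
  ultimately show ?thesis by simp
qed

lemma cut_weight_isolated:
  "inc_edges (del_edges E S) v = {} \<Longrightarrow> cut_weight E h S {v} = wdeg E h v"
  unfolding cut_weight_def wdeg_def inc_edges_def del_edges_def
  by (rule sum.cong) auto

definition odd_components_and_isolated :: "'a set \<Rightarrow> 'a set set \<Rightarrow> 'a set set" where
  "odd_components_and_isolated V E =
     {C \<in> components V E. odd (card C) \<and> card C \<ge> 3} \<union> (\<lambda>v. {v}) ` {v \<in> V. inc_edges E v = {}}"

lemma odd_components_and_isolated_subset:
  "X \<in> odd_components_and_isolated V E \<Longrightarrow> X \<subseteq> V"
  by (auto simp: odd_components_and_isolated_def dest: components_subset)

lemma finite_odd_components_and_isolated:
  "finite V \<Longrightarrow> finite (odd_components_and_isolated V E)"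
  by (simp add: odd_components_and_isolated_def components_def)

lemma pairwise_disjnt_odd_components_and_isolated:
  "pairwise disjnt (odd_components_and_isolated V E)"
proof -
  have "v \<notin> C" if "C \<in> components V E" "card C \<ge> 3" "inc_edges E v = {}" for C v
    using component_of_isolated[OF that(1) _ that(3)] that(2) by force
  then show ?thesis
    unfolding odd_components_and_isolated_def pairwise_def disjnt_def
    by (blast dest: components_eq_if_common)
qed

lemma odd_count_add_iso_count_le_sum:
  fixes c :: "'a set \<Rightarrow> nat"
  assumes "finite V"
    and "\<And>C. C \<in> components V E \<Longrightarrow> odd (card C) \<Longrightarrow> card C \<ge> 3 \<Longrightarrow> 1 \<le> c C"
    and "\<And>v. v \<in> V \<Longrightarrow> inc_edges E v = {} \<Longrightarrow> k \<le> c {v}"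
  shows "odd_count V E + k * iso_count V E \<le> (\<Sum>X\<in>odd_components_and_isolated V E. c X)"
proof -
  define A where "A = {C \<in> components V E. odd (card C) \<and> card C \<ge> 3}"
  define B where "B = {v \<in> V. inc_edges E v = {}}"
  have fin: "finite A" "finite B"
    using assms(1) by (simp_all add: A_def B_def components_def)
  have "odd_count V E + k * iso_count V E \<le> (\<Sum>X\<in>A. c X) + (\<Sum>v\<in>B. c {v})"
    using assms(2,3) sum_mono[of A "\<lambda>_. 1" c] sum_mono[of B "\<lambda>_. k" "\<lambda>v. c {v}"]
    by (simp add: odd_count_def iso_count_def A_def B_def mult.commute)
  also have "\<dots> = (\<Sum>X\<in>A \<union> (\<lambda>v. {v}) ` B. c X)"
    using fin by (subst sum.union_disjoint) (auto simp: sum.reindex A_def)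
  finally show ?thesis
    by (simp add: odd_components_and_isolated_def A_def B_def)
qed

lemma sum_cut_weight_indicator_le:
  assumes "simple_graph V E" "S \<subseteq> V" "finite F" "pairwise disjnt F"
    and "\<And>X. X \<in> F \<Longrightarrow> X \<subseteq> V - S"
  shows "(\<Sum>X\<in>F. cut_weight E h S X + of_bool (v \<in> X)) \<le> (\<Sum>s\<in>S. wdeg E h s) + 1"
proof -
  have "card {X \<in> F. v \<in> X} \<le> 1"
    using assms(3,4) card_le_Suc0_iff_eq[of "{X \<in> F. v \<in> X}"]
    by (auto simp: pairwise_def disjnt_def)
  moreover have "(\<Sum>X\<in>F. cut_weight E h S X) \<le> (\<Sum>s\<in>S. wdeg E h s)"
    by (rule sum_cut_weight_le[OF assms])
  ultimately show ?thesis
    using assms(3) by (simp add: sum.distrib Collect_conj_eq)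
qed

lemma sum_wdeg_le_if_int_k_matching:
  "int_k_matching V E k h \<Longrightarrow> S \<subseteq> V \<Longrightarrow> (\<Sum>s\<in>S. wdeg E h s) \<le> k * card S"
  using sum_bounded_above[of S "wdeg E h" k]
  by (auto simp: int_k_matching_def wdeg_def mult.commute)

theorem lemma3p6:
  fixes V :: "'a set" and E :: "'a set set" and k :: nat and h :: "'a set \<Rightarrow> nat"
    and S :: "'a set"
  assumes "simple_graph V E"
    and "k \<ge> 1" and "odd k"
    and "almost_perfect_int_k_matching V E k h"
    and "S \<subseteq> V"
  shows "odd_count (V - S) (del_edges E S) + k * iso_count (V - S) (del_edges E S)
           \<le> k * card S + 1"
proof -
  let ?H = "odd_components_and_isolated (V - S) (del_edges E S)"
  obtain v' where v': "v' \<in> V" "wdeg E h v' = k - 1" "\<And>v. v \<in> V - {v'} \<Longrightarrow> wdeg E h v = k"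
    using assms(4) unfolding almost_perfect_int_k_matching_def wdeg_def by blast
  define charge where "charge X = cut_weight E h S X + of_bool (v' \<in> X)" for X
  have odd_charge: "1 \<le> charge C"
    if C: "C \<in> components (V - S) (del_edges E S)" "odd (card C)" for C
  proof (cases "v' \<in> C")
    case False
    then have "odd (cut_weight E h S C)"
      using C v'(3) components_subset[OF C(1)]
      by (intro odd_cut_weight_if_odd_component[OF assms(1) _ _ assms(3)]) auto
    then show ?thesis by (cases "cut_weight E h S C") (auto simp: charge_def)
  qed (simp add: charge_def)
  have iso_charge: "k \<le> charge {v}" if "v \<in> V - S" "inc_edges (del_edges E S) v = {}" for v
    using that v' assms(2) cut_weight_isolated[of E S v h]
    by (cases "v = v'") (auto simp: charge_def)
  have "finite V" using assms(1) by (simp add: simple_graph_def)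
  then have "odd_count (V - S) (del_edges E S) + k * iso_count (V - S) (del_edges E S)
      \<le> (\<Sum>X\<in>?H. charge X)"
    using odd_charge iso_charge by (intro odd_count_add_iso_count_le_sum) auto
  also have "\<dots> \<le> (\<Sum>s\<in>S. wdeg E h s) + 1"
    unfolding charge_def
    using \<open>finite V\<close> pairwise_disjnt_odd_components_and_isolated
    by (intro sum_cut_weight_indicator_le[OF assms(1,5)] finite_odd_components_and_isolated)
      (auto dest: odd_components_and_isolated_subset)
  also have "\<dots> \<le> k * card S + 1"
    using assms(4) sum_wdeg_le_if_int_k_matching[OF _ assms(5)]
    by (simp add: almost_perfect_int_k_matching_def)
  finally show ?thesis .
qed

end
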